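(* Suppose there exists a subspace $\mathcal C\subseteq V$ of dimension $K$ with orthogonal projector $P$ that detects every error in $\mathcal E_\xi$ for each $\xi$ in a prescribed set $\mathcal S$ of sector labels. Then there exist real numbers $\{A_\xi\}_\xi,\{B_\xi\}_\xi$ (indexed by all sectors) satisfying $A_\xi\ge0$ for all $\xi$; $A_\xi\le K B_\xi$ for all $\xi$; $\sum_\xi A_\xi=K$; $\sum_\xi B_\xi=K^2$; $B_\xi=\sum_\rho M_{\xi\rho}A_\rho$ for all $\xi$; and $A_\xi=KB_\xi$ for all $\xi\in\mathcal S$. Namely one may take $A_\xi=A_\xi(P,P)$, $B_\xi=B_\xi(P,P)$. In particular, if this linear system has no solution, no $K$-dimensional subspace of $V$ detects all errors in the sectors $\mathcal E_\xi$, $\xi\in\mathcal S$.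
   Context: Let $G$ be a group and $V$ a finite-dimensional complex Hilbert space carrying a unitary representation $\rho$ of $G$; $G$ acts on $\mathcal L(V)$ by conjugation $g\cdot X=\rho(g)X\rho(g)^\dagger$, unitary for the Hilbert–Schmidt inner product $\langle X_1,X_2\rangle=\mathrm{Tr}(X_1^\dagger X_2)$. Assume multiplicity-freeness: $\mathcal L(V)=\bigoplus_\xi\mathcal E_\xi$, a finite orthogonal direct sum of nonzero, pairwise non-isomorphic irreducible $G$-subrepresentations; $d_\xi=\dim\mathcal E_\xi$. Let $\Pi_\xi$ be the orthogonal projector onto $\mathcal E_\xi$, $\mathcal B_\xi$ an orthonormal basis of $\mathcal E_\xi$, $\mathrm{Twirl}_\xi(X)=\sum_{E\in\mathcal B_\xi}E^\dagger XE$, $A_\xi(X_1,X_2)=\langle X_1,\Pi_\xi(X_2)\rangle$, $B_\xi(X_1,X_2)=\langle X_1,\mathrm{Twirl}_\xi(X_2)\rangle$. With $\langle\!\langle\mathcal S,\mathcal T\rangle\!\rangle=\mathrm{Tr}(\mathcal S^\dagger\mathcal T)$ on superoperators, the unnormalized MacWilliams matrix is $M_{\xi\rho}=\frac{1}{d_\rho}\langle\!\langle\Pi_\rho,\mathrm{Twirl}_\xi\rangle\!\rangle$ (equivalently $\sqrt{d_\xi/d_\rho}\,U_{\xi\rho}$ with $U_{\xi\rho}=\langle\!\langle d_\rho^{-1/2}\Pi_\rho,d_\xi^{-1/2}\mathrm{Twirl}_\xi\rangle\!\rangle$). A subspace $\mathcal C\subseteq V$ with orthogonal projector $P$ detects every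 error in $\mathcal F\subseteq\mathcal L(V)$ if for every $E\in\mathcal F$ there is $c_E\in\mathbb C$ with $PEP=c_EP$. *)

theory Defs
  imports "HOL-Analysis.Analysis" "HOL-Algebra.Group"
begin

text \<open>Operators on V = complex^'n are matrices complex^'n^'n.\<close>

definition adjm :: "complex^'n^'n \<Rightarrow> complex^'n^'n" where
  "adjm X = (\<chi> i j. cnj (X $ j $ i))"

definition hs :: "complex^'n^'n \<Rightarrow> complex^'n^'n \<Rightarrow> complex" where
  "hs X Y = trace (adjm X ** Y)"

definition msc :: "complex \<Rightarrow> complex^'n^'n \<Rightarrow> complex^'n^'n" where
  "msc c X = (\<chi> i j. c * X $ i $ j)"

definition vinner :: "complex^'n \<Rightarrow> complex^'n \<Rightarrow> complex" where
  "vinner x y = (\<Sum>i\<in>UNIV. cnj (x $ i) * y $ i)"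

definition unitary_mat :: "complex^'n^'n \<Rightarrow> bool" where
  "unitary_mat U \<longleftrightarrow> adjm U ** U = mat 1 \<and> U ** adjm U = mat 1"

definition unitary_rep :: "('g, 'b) monoid_scheme \<Rightarrow> ('g \<Rightarrow> complex^'n^'n) \<Rightarrow> bool" where
  "unitary_rep G \<rho> \<longleftrightarrow> group G \<and>
     (\<forall>g\<in>carrier G. unitary_mat (\<rho> g)) \<and>
     (\<forall>g\<in>carrier G. \<forall>h\<in>carrier G. \<rho> (g \<otimes>\<^bsub>G\<^esub> h) = \<rho> g ** \<rho> h)"

definition conj_act :: "('g \<Rightarrow> complex^'n^'n) \<Rightarrow> 'g \<Rightarrow> complex^'n^'n \<Rightarrow> complex^'n^'n" where
  "conj_act \<rho> g X = \<rho> g ** X ** adjm (\<rho> g)"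

definition csubspace :: "(complex^'n^'n) set \<Rightarrow> bool" where
  "csubspace E \<longleftrightarrow> 0 \<in> E \<and> (\<forall>X\<in>E. \<forall>Y\<in>E. X + Y \<in> E) \<and> (\<forall>c. \<forall>X\<in>E. msc c X \<in> E)"

definition cspan :: "(complex^'n^'n) set \<Rightarrow> (complex^'n^'n) set" where
  "cspan S = {X. \<exists>F c. finite F \<and> F \<subseteq> S \<and> X = (\<Sum>E\<in>F. msc (c E) E)}"

definition invariant :: "('g, 'b) monoid_scheme \<Rightarrow> ('g \<Rightarrow> complex^'n^'n) \<Rightarrow> (complex^'n^'n) set \<Rightarrow> bool" where
  "invariant G \<rho> W \<longleftrightarrow> (\<forall>g\<in>carrier G. \<forall>X\<in>W. conj_act \<rho> g X \<in> W)"

definition irreducible_subrep :: "('g, 'b) monoid_scheme \<Rightarrow> ('g \<Rightarrow> complex^'n^'n) \<Rightarrow> (complex^'n^'n) set \<Rightarrow> bool" where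
  "irreducible_subrep G \<rho> E \<longleftrightarrow> csubspace E \<and> E \<noteq> {0} \<and> invariant G \<rho> E \<and>
     (\<forall>W. csubspace W \<and> W \<subseteq> E \<and> invariant G \<rho> W \<longrightarrow> W = {0} \<or> W = E)"

definition isomorphic_subreps :: "('g, 'b) monoid_scheme \<Rightarrow> ('g \<Rightarrow> complex^'n^'n) \<Rightarrow>
    (complex^'n^'n) set \<Rightarrow> (complex^'n^'n) set \<Rightarrow> bool" where
  "isomorphic_subreps G \<rho> E F \<longleftrightarrow> (\<exists>T. bij_betw T E F \<and>
     (\<forall>X\<in>E. \<forall>Y\<in>E. T (X + Y) = T X + T Y) \<and>
     (\<forall>c. \<forall>X\<in>E. T (msc c X) = msc c (T X)) \<and>
     (\<forall>g\<in>carrier G. \<forall>X\<in>E. T (conj_act \<rho> g X) = conj_act \<rho> g (T X)))"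

definition multiplicity_free_decomp :: "('g, 'b) monoid_scheme \<Rightarrow> ('g \<Rightarrow> complex^'n^'n) \<Rightarrow>
    ('x::finite \<Rightarrow> (complex^'n^'n) set) \<Rightarrow> bool" where
  "multiplicity_free_decomp G \<rho> Esp \<longleftrightarrow>
     (\<forall>\<xi>. irreducible_subrep G \<rho> (Esp \<xi>)) \<and>
     (\<forall>\<xi> \<eta>. \<xi> \<noteq> \<eta> \<longrightarrow> (\<forall>X\<in>Esp \<xi>. \<forall>Y\<in>Esp \<eta>. hs X Y = 0)) \<and>
     (\<forall>\<xi> \<eta>. \<xi> \<noteq> \<eta> \<longrightarrow> \<not> isomorphic_subreps G \<rho> (Esp \<xi>) (Esp \<eta>)) \<and>
     (\<forall>X. \<exists>f. (\<forall>\<xi>. f \<xi> \<in> Esp \<xi>) \<and> X = (\<Sum>\<xi>\<in>UNIV. f \<xi>))"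

definition orthonormal_basis_of :: "(complex^'n^'n) set \<Rightarrow> (complex^'n^'n) set \<Rightarrow> bool" where
  "orthonormal_basis_of B E \<longleftrightarrow> finite B \<and> B \<subseteq> E \<and>
     (\<forall>X\<in>B. \<forall>Y\<in>B. hs X Y = (if X = Y then 1 else 0)) \<and> E \<subseteq> cspan B"

definition Proj :: "(complex^'n^'n) set \<Rightarrow> complex^'n^'n \<Rightarrow> complex^'n^'n" where
  "Proj B X = (\<Sum>E\<in>B. msc (hs E X) E)"

definition Twirl :: "(complex^'n^'n) set \<Rightarrow> complex^'n^'n \<Rightarrow> complex^'n^'n" where
  "Twirl B X = (\<Sum>E\<in>B. adjm E ** X ** E)"

definition munit :: "'n \<Rightarrow> 'n \<Rightarrow> complex^'n^'n" where
  "munit i j = (\<chi> k l. if k = i \<and> l = j then 1 else 0)"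

text \<open>Superoperator inner product Tr(S^dagger T), computed in the orthonormal basis of matrix units.\<close>
definition sop_inner :: "(complex^'n^'n \<Rightarrow> complex^'n^'n) \<Rightarrow> (complex^'n^'n \<Rightarrow> complex^'n^'n) \<Rightarrow> complex" where
  "sop_inner S T = (\<Sum>i\<in>UNIV. \<Sum>j\<in>UNIV. hs (S (munit i j)) (T (munit i j)))"

definition MacW :: "('x \<Rightarrow> (complex^'n^'n) set) \<Rightarrow> 'x \<Rightarrow> 'x \<Rightarrow> complex" where
  "MacW B \<xi> \<rho> = sop_inner (Proj (B \<rho>)) (Twirl (B \<xi>)) / of_nat (card (B \<rho>))"

definition orth_projector :: "(complex^'n) set \<Rightarrow> complex^'n^'n \<Rightarrow> bool" where
  "orth_projector C P \<longleftrightarrow> (\<forall>v. P *v v \<in> C \<and> (\<forall>w\<in>C. vinner w (v - P *v v) = 0))"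

definition detects :: "complex^'n^'n \<Rightarrow> (complex^'n^'n) set \<Rightarrow> bool" where
  "detects P F \<longleftrightarrow> (\<forall>E\<in>F. \<exists>c. P ** E ** P = msc c P)"

end

theory Submission
  imports Defs "Jordan_Normal_Form.Char_Poly"
begin

(* Write A_\<xi> = \<Sum>E\<in>B_\<xi>. |<E, P>|^2 and B_\<xi> = \<Sum>E\<in>B_\<xi>. |PEP|^2; these are A_\<xi>(P,P) and
   B_\<xi>(P,P) because P is self-adjoint and idempotent. As <E, P> = <PEP, P>, Cauchy-Schwarz
   together with |P|^2 = tr P = K gives A_\<xi> \<le> K B_\<xi>, with equality when every PEP is a
   multiple of P, i.e. when P detects the sector. The sector projections resolve the identity,
   so \<Sum>A_\<xi> = |P|^2 = K, and the union of the bases B_\<xi> is an orthonormal basis of L(V), so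
   \<Sum>Twirl_\<xi>(X) = tr(X) 1 and \<Sum>B_\<xi> = (tr P)^2 = K^2. Finally Twirl_\<xi> commutes with the
   conjugation action, so by Schur's lemma and multiplicity-freeness it acts on each sector
   E_\<rho> as a scalar; pairing with \<Pi>_\<rho> identifies that scalar as M_\<xi>\<rho>, and pairing with P
   gives B_\<xi> = \<Sum>M_\<xi>\<rho> A_\<rho>. *)

section \<open>Complex matrices and the Hilbert-Schmidt inner product\<close>

lemma complex_matrix_has_eigenvector:
  fixes M :: "nat \<Rightarrow> nat \<Rightarrow> complex"
  assumes "0 < d"
  shows "\<exists>lam v. (\<exists>i<d. v i \<noteq> 0) \<and> (\<forall>i<d. (\<Sum>j<d. M i j * v j) = lam * v i)"
proof -
  define A where "A = Matrix.mat d d (\<lambda>(i,j). M i j)"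
  have A: "A \<in> carrier_mat d d" unfolding A_def by simp
  have "degree (char_poly A) = d" using degree_monic_char_poly[OF A] by simp
  then have "\<not> constant (poly (char_poly A))" using assms constant_degree[of "char_poly A"] by simp
  then obtain k where "poly (char_poly A) k = 0" using fundamental_theorem_of_algebra by blast
  then have "eigenvalue A k" using eigenvalue_root_char_poly[OF A] by simp
  then obtain v where v: "v \<in> carrier_vec d" "v \<noteq> 0\<^sub>v d" "A *\<^sub>v v = k \<cdot>\<^sub>v v"
    unfolding eigenvalue_def eigenvector_def using A by auto
  have "\<exists>i<d. v $ i \<noteq> 0"
  proof (rule ccontr)
    assume "\<not> ?thesis"
    then have "v = 0\<^sub>v d" using v(1) by (auto intro!: eq_vecI)
    with v(2) show False by simp
  qed
  moreover have "(\<Sum>j<d. M i j * v $ j) = k * v $ i" if i: "i < d" for i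
  proof -
    have "(A *\<^sub>v v) $ i = (k \<cdot>\<^sub>v v) $ i" using v(3) by simp
    then show ?thesis
      using i v(1) A by (simp add: A_def scalar_prod_def row_def lessThan_atLeast0)
  qed
  ultimately show ?thesis by blast
qed

(* Jordan_Normal_Form also writes its vector indexing as $. *)
no_notation Matrix.vec_index (infixl \<open>$\<close> 100)

abbreviation Imat :: "complex^'n^'n" where
  "Imat \<equiv> Finite_Cartesian_Product.mat 1"

lemmas cvec_eq_iff = Finite_Cartesian_Product.vec_eq_iff

lemma matrix_mult_nth: "((A::complex^'n^'n) ** B) $ i $ j = (\<Sum>k\<in>UNIV. A$i$k * B$k$j)"
  by (simp add: matrix_matrix_mult_def)

lemma msc_nth [simp]: "msc c X $ i $ j = c * X$i$j"
  by (simp add: msc_def)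

lemma adjm_nth [simp]: "adjm X $ i $ j = cnj (X$j$i)"
  by (simp add: adjm_def)

lemma Imat_nth: "Imat $ i $ j = (if i = j then 1 else 0)"
  by (simp add: Finite_Cartesian_Product.mat_def)

lemma munit_nth: "munit i j $ k $ l = (if k = i \<and> l = j then 1 else 0)"
  by (simp add: munit_def)

lemma adjm_adjm [simp]: "adjm (adjm X) = X"
  by (simp add: cvec_eq_iff)

lemma adjm_mult: "adjm ((A::complex^'n^'n) ** B) = adjm B ** adjm A"
  by (simp add: cvec_eq_iff matrix_mult_nth mult.commute)

lemma msc_add: "msc c (X + Y) = msc c X + msc c Y"
  by (simp add: cvec_eq_iff algebra_simps)

lemma msc_msc: "msc c (msc d X) = msc (c * d) X"
  by (simp add: cvec_eq_iff)

lemma msc_0 [simp]: "msc 0 X = 0" "msc c 0 = 0"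
  by (simp_all add: cvec_eq_iff)

lemma msc_minus_one: "msc (-1) X = - X"
  by (simp add: cvec_eq_iff)

lemma msc_sum: "msc c (sum f F) = (\<Sum>x\<in>F. msc c (f x))"
  by (simp add: cvec_eq_iff sum_distrib_left)

lemma mult_msc_mult:
  fixes U V :: "complex^'n^'n"
  shows "U ** msc c X ** V = msc c (U ** X ** V)"
  by (simp add: cvec_eq_iff matrix_mult_nth sum_distrib_left sum_distrib_right algebra_simps)

lemma matrix_add_rdistrib: "((B::complex^'n^'n) + C) ** A = B ** A + C ** A"
  by (simp add: cvec_eq_iff matrix_mult_nth sum.distrib algebra_simps)

lemma mult_sum_mult:
  fixes U V :: "complex^'n^'n"
  shows "U ** sum f F ** V = (\<Sum>x\<in>F. U ** f x ** V)"
  by (induct F rule: infinite_finite_induct) (auto simp: matrix_add_ldistrib matrix_add_rdistrib)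

lemma unitary_adjm_mult: "unitary_mat U \<Longrightarrow> adjm U ** U = Imat"
  by (simp add: unitary_mat_def)

lemma unitary_mult_adjm: "unitary_mat U \<Longrightarrow> U ** adjm U = Imat"
  by (simp add: unitary_mat_def)

lemma unitary_cancel:
  assumes "unitary_mat U"
  shows "(A::complex^'n^'n) ** adjm U ** U = A" and "A ** U ** adjm U = A"
  using assms unfolding unitary_mat_def by (metis matrix_mul_assoc matrix_mul_rid)+

lemma inj_unitary_conj:
  assumes "unitary_mat U"
  shows "inj (\<lambda>X. U ** X ** adjm U)"
proof (rule injI)
  fix X Y assume "U ** X ** adjm U = U ** Y ** adjm U"
  then have "adjm U ** (U ** X ** adjm U) ** U = adjm U ** (U ** Y ** adjm U) ** U" by simp
  then show "X = Y"
    using unitary_cancel[OF assms] unitary_adjm_mult[OF assms] by (simp add: matrix_mul_assoc)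
qed

lemma unitary_repD:
  assumes "unitary_rep G \<rho>"
  shows "group G"
    and "g \<in> carrier G \<Longrightarrow> unitary_mat (\<rho> g)"
    and "g \<in> carrier G \<Longrightarrow> h \<in> carrier G \<Longrightarrow> \<rho> (g \<otimes>\<^bsub>G\<^esub> h) = \<rho> g ** \<rho> h"
  using assms by (simp_all add: unitary_rep_def)

lemma unitary_rep_one:
  assumes rep: "unitary_rep G \<rho>"
  shows "\<rho> \<one>\<^bsub>G\<^esub> = Imat"
proof -
  let ?U = "\<rho> \<one>\<^bsub>G\<^esub>"
  have grp: "group G" by (rule unitary_repD(1)[OF rep])
  then have one: "\<one>\<^bsub>G\<^esub> \<in> carrier G" by (simp add: group.is_monoid monoid.one_closed)
  have U: "unitary_mat ?U" by (rule unitary_repD(2)[OF rep one])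
  have "\<rho> (\<one>\<^bsub>G\<^esub> \<otimes>\<^bsub>G\<^esub> \<one>\<^bsub>G\<^esub>) = ?U ** ?U" by (rule unitary_repD(3)[OF rep one one])
  then have idem: "?U = ?U ** ?U" using grp one by (simp add: group.is_monoid monoid.l_one)
  have "Imat = adjm ?U ** ?U" using unitary_adjm_mult[OF U] by simp
  also have "\<dots> = (adjm ?U ** ?U) ** ?U" by (subst idem) (simp add: matrix_mul_assoc)
  also have "\<dots> = ?U" using unitary_adjm_mult[OF U] by simp
  finally show ?thesis by simp
qed

lemma unitary_rep_inv:
  assumes rep: "unitary_rep G \<rho>" and g: "g \<in> carrier G"
  shows "\<rho> (inv\<^bsub>G\<^esub> g) = adjm (\<rho> g)"
proof -
  have grp: "group G" by (rule unitary_repD(1)[OF rep])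
  then have "\<rho> (g \<otimes>\<^bsub>G\<^esub> inv\<^bsub>G\<^esub> g) = \<rho> g ** \<rho> (inv\<^bsub>G\<^esub> g)"
    using g by (simp add: unitary_repD(3)[OF rep] group.inv_closed)
  then have "\<rho> g ** \<rho> (inv\<^bsub>G\<^esub> g) = Imat"
    using unitary_rep_one[OF rep] group.r_inv[OF grp g] by simp
  then have "adjm (\<rho> g) ** \<rho> g ** \<rho> (inv\<^bsub>G\<^esub> g) = adjm (\<rho> g)"
    by (simp add: matrix_mul_assoc[symmetric])
  then show ?thesis using unitary_adjm_mult[OF unitary_repD(2)[OF rep g]] by simp
qed

lemma hs_altdef: "hs X Y = (\<Sum>i\<in>UNIV. \<Sum>k\<in>UNIV. cnj (X$k$i) * Y$k$i)"
  by (simp add: hs_def trace_def matrix_mult_nth)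

lemma hs_add_right: "hs X (Y + Z) = hs X Y + hs X Z"
  by (simp add: hs_altdef algebra_simps sum.distrib)

lemma hs_msc_left: "hs (msc c X) Y = cnj c * hs X Y"
  by (simp add: hs_altdef sum_distrib_left algebra_simps)

lemma hs_msc_right: "hs X (msc c Y) = c * hs X Y"
  by (simp add: hs_altdef sum_distrib_left algebra_simps)

lemma hs_zero [simp]: "hs X 0 = 0" "hs 0 X = 0"
  by (simp_all add: hs_altdef)

lemma hs_sum_right: "hs X (sum f F) = (\<Sum>x\<in>F. hs X (f x))"
  by (induct F rule: infinite_finite_induct) (auto simp: hs_add_right)

lemma hs_cnj: "cnj (hs X Y) = hs Y X"
  by (simp add: hs_altdef mult.commute)

lemma hs_munit: "hs E (munit k i) = cnj (E $ k $ i)"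
proof -
  have "hs E (munit k i) = (\<Sum>a\<in>UNIV. \<Sum>b\<in>UNIV. if b = k \<and> a = i then cnj (E$b$a) else 0)"
    unfolding hs_altdef munit_nth by (intro sum.cong) auto
  also have "\<dots> = (\<Sum>a\<in>UNIV. if a = i then cnj (E$k$a) else 0)"
    by (intro sum.cong) (auto simp: sum.delta')
  finally show ?thesis by simp
qed

definition hs_sqnorm :: "complex^'n^'n \<Rightarrow> real" where
  "hs_sqnorm X = (\<Sum>i\<in>UNIV. \<Sum>k\<in>UNIV. (cmod (X$k$i))\<^sup>2)"

lemma cnj_mult_self: "cnj z * z = complex_of_real ((cmod z)\<^sup>2)"
  by (metis complex_norm_square mult.commute)

lemma hs_self: "hs X X = complex_of_real (hs_sqnorm X)"
  by (simp add: hs_altdef hs_sqnorm_def cnj_mult_self del: of_real_power)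

lemma hs_Cauchy_Schwarz:
  fixes X Y :: "complex^'n^'n"
  shows "(cmod (hs X Y))\<^sup>2 \<le> hs_sqnorm X * hs_sqnorm Y"
proof -
  let ?x = "\<lambda>p. cmod (X $ snd p $ fst p)" and ?y = "\<lambda>p. cmod (Y $ snd p $ fst p)"
  have pairs: "(\<Sum>i\<in>UNIV. \<Sum>k\<in>UNIV. f i k) = (\<Sum>p\<in>UNIV. f (fst p) (snd p))"
    for f :: "'n \<Rightarrow> 'n \<Rightarrow> 'c::comm_monoid_add"
    by (simp add: sum.cartesian_product UNIV_Times_UNIV[symmetric] case_prod_beta del: UNIV_Times_UNIV)
  have "cmod (hs X Y) \<le> (\<Sum>p\<in>UNIV. ?x p * ?y p)"
    unfolding hs_altdef pairs by (rule order.trans[OF norm_sum]) (simp add: norm_mult)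
  then have "(cmod (hs X Y))\<^sup>2 \<le> (\<Sum>p\<in>UNIV. ?x p * ?y p)\<^sup>2"
    by (simp add: power_mono)
  also have "\<dots> \<le> (\<Sum>p\<in>UNIV. (?x p)\<^sup>2) * (\<Sum>p\<in>UNIV. (?y p)\<^sup>2)"
    by (rule Cauchy_Schwarz_ineq_sum)
  finally show ?thesis unfolding hs_sqnorm_def pairs .
qed

lemma hs_unitary_conj:
  assumes "unitary_mat U"
  shows "hs (U ** X ** adjm U) (U ** Y ** adjm U) = hs X Y"
proof -
  have "hs (U ** X ** adjm U) (U ** Y ** adjm U) = trace (U ** (adjm X ** adjm U ** U ** Y ** adjm U))"
    by (simp add: hs_def adjm_mult matrix_mul_assoc)
  also have "\<dots> = trace (adjm X ** Y ** adjm U ** U)"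
    by (subst trace_mul_sym) (simp add: unitary_cancel[OF assms] matrix_mul_assoc)
  also have "\<dots> = hs X Y" by (simp add: hs_def unitary_cancel[OF assms])
  finally show ?thesis .
qed

section \<open>Linear operators and orthonormal families\<close>

definition linear_op :: "(complex^'n^'n \<Rightarrow> complex^'n^'n) \<Rightarrow> bool" where
  "linear_op T \<longleftrightarrow> (\<forall>X Y. T (X + Y) = T X + T Y) \<and> (\<forall>c X. T (msc c X) = msc c (T X))"

lemma linear_opD:
  assumes "linear_op T"
  shows "T (X + Y) = T X + T Y" and "T (msc c X) = msc c (T X)" and "T 0 = 0"
  using assms unfolding linear_op_def by (metis msc_0(1))+

lemma linear_op_sum: "linear_op T \<Longrightarrow> T (sum f F) = (\<Sum>x\<in>F. T (f x))"
  by (induct F rule: infinite_finite_induct) (simp_all add: linear_opD)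

lemma linear_op_comp: "linear_op S \<Longrightarrow> linear_op T \<Longrightarrow> linear_op (S \<circ> T)"
  by (simp add: linear_op_def)

lemma csubspace_sum:
  assumes "csubspace E" and "\<forall>x\<in>F. f x \<in> E"
  shows "sum f F \<in> E"
  using assms(2) by (induct F rule: infinite_finite_induct) (use assms(1) in \<open>auto simp: csubspace_def\<close>)

lemma cspan_subset:
  assumes "csubspace E" and "Bs \<subseteq> E"
  shows "cspan Bs \<subseteq> E"
proof
  fix X assume "X \<in> cspan Bs"
  then obtain F c where "F \<subseteq> Bs" and X: "X = (\<Sum>Y\<in>F. msc (c Y) Y)"
    unfolding cspan_def by blast
  then have "\<forall>Y\<in>F. msc (c Y) Y \<in> E" using assms unfolding csubspace_def by blast
  then show "X \<in> E" unfolding X by (rule csubspace_sum[OF assms(1)])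
qed

definition orthonormal :: "(complex^'n^'n) set \<Rightarrow> bool" where
  "orthonormal Bs \<longleftrightarrow> (\<forall>X\<in>Bs. \<forall>Y\<in>Bs. hs X Y = (if X = Y then 1 else 0))"

lemma orthonormal_basis_ofD:
  assumes "orthonormal_basis_of Bs E"
  shows "finite Bs" "orthonormal Bs" "Bs \<subseteq> E" "E \<subseteq> cspan Bs"
  using assms by (simp_all add: orthonormal_basis_of_def orthonormal_def)

lemma orthonormal_basis_nonempty:
  assumes "orthonormal_basis_of Bs E" and "E \<noteq> {0}" and "csubspace E"
  shows "Bs \<noteq> {}"
proof
  assume "Bs = {}"
  then have "cspan Bs \<subseteq> {0}" by (auto simp: cspan_def)
  moreover have "0 \<in> E" using assms(3) by (simp add: csubspace_def)
  ultimately show False using assms(1,2) by (auto simp: orthonormal_basis_of_def)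
qed

lemma hs_sqnorm_orthonormal: "orthonormal Bs \<Longrightarrow> E \<in> Bs \<Longrightarrow> hs_sqnorm E = 1"
  using hs_self[of E] by (simp add: orthonormal_def)

lemma linear_op_Proj: "linear_op (Proj Bs)"
  unfolding linear_op_def
proof (intro conjI allI)
  show "Proj Bs (X + Y) = Proj Bs X + Proj Bs Y" for X Y
    unfolding Proj_def hs_add_right by (simp add: msc_def sum.distrib cvec_eq_iff distrib_right)
  show "Proj Bs (msc c X) = msc c (Proj Bs X)" for c X
    by (simp add: Proj_def hs_msc_right msc_sum msc_msc)
qed

lemma Proj_in_cspan: "finite Bs \<Longrightarrow> Proj Bs X \<in> cspan Bs"
  unfolding cspan_def Proj_def by (intro CollectI exI[of _ Bs] exI[of _ "\<lambda>E. hs E X"]) simp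

lemma hs_basis_cspan:
  assumes "orthonormal Bs" and "finite F" "F \<subseteq> Bs" and "E \<in> Bs"
  shows "hs E (\<Sum>E'\<in>F. msc (c E') E') = (if E \<in> F then c E else 0)"
proof -
  have "hs E (\<Sum>E'\<in>F. msc (c E') E') = (\<Sum>E'\<in>F. c E' * hs E E')"
    by (simp add: hs_sum_right hs_msc_right)
  also have "\<dots> = (\<Sum>E'\<in>F. if E' = E then c E else 0)"
    using assms unfolding orthonormal_def by (intro sum.cong) auto
  finally show ?thesis using assms(2) by (simp add: sum.delta')
qed

lemma hs_basis_Proj:
  assumes "finite Bs" "orthonormal Bs" "E \<in> Bs"
  shows "hs E (Proj Bs X) = hs E X"
  using hs_basis_cspan[OF assms(2,1) order.refl assms(3)] assms(3) by (simp add: Proj_def)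

lemma Proj_cspan:
  assumes "finite Bs" "orthonormal Bs" and "Y \<in> cspan Bs"
  shows "Proj Bs Y = Y"
proof -
  obtain F c where F: "finite F" "F \<subseteq> Bs" "Y = (\<Sum>E\<in>F. msc (c E) E)"
    using assms(3) unfolding cspan_def by blast
  have "Proj Bs Y = (\<Sum>E\<in>Bs. if E \<in> F then msc (c E) E else 0)"
    unfolding Proj_def using hs_basis_cspan[OF assms(2) F(1,2)] F(3) by (intro sum.cong) auto
  also have "\<dots> = Y"
    using F assms(1) by (simp add: sum.If_cases Int_absorb1)
  finally show ?thesis .
qed

lemma Proj_eq_0_if_orthogonal: "(\<forall>E\<in>Bs. hs E Y = 0) \<Longrightarrow> Proj Bs Y = 0"
  by (simp add: Proj_def)

lemma hs_Proj_self: "hs X (Proj Bs X) = complex_of_real (\<Sum>E\<in>Bs. (cmod (hs E X))\<^sup>2)"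
proof -
  have "hs X (Proj Bs X) = (\<Sum>E\<in>Bs. hs E X * cnj (hs E X))"
    by (simp add: Proj_def hs_sum_right hs_msc_right hs_cnj)
  then show ?thesis by (simp add: complex_norm_square[symmetric])
qed

lemma hs_Proj_Proj:
  assumes "finite Bs" "orthonormal Bs"
  shows "hs (Proj Bs X) (Proj Bs Y) = hs X (Proj Bs Y)"
proof -
  have "hs (Proj Bs X) E = hs X E" if "E \<in> Bs" for E
    using hs_basis_Proj[OF assms that] by (metis hs_cnj)
  then show ?thesis by (simp add: Proj_def hs_sum_right hs_msc_right)
qed

lemma sop_inner_Proj_self:
  assumes "finite Bs" "orthonormal Bs"
  shows "sop_inner (Proj Bs) (Proj Bs) = of_nat (card Bs)"
proof -
  have "sop_inner (Proj Bs) (Proj Bs)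
      = complex_of_real (\<Sum>i\<in>UNIV. \<Sum>j\<in>UNIV. \<Sum>E\<in>Bs. (cmod (E $ i $ j))\<^sup>2)"
    by (simp add: sop_inner_def hs_Proj_Proj[OF assms] hs_Proj_self hs_munit)
  also have "(\<Sum>i\<in>UNIV. \<Sum>j\<in>UNIV. \<Sum>E\<in>Bs. (cmod (E $ i $ j))\<^sup>2)
      = (\<Sum>E\<in>Bs. \<Sum>i\<in>UNIV. \<Sum>j\<in>UNIV. (cmod (E $ i $ j))\<^sup>2)"
    by (subst sum.swap) (rule sum.cong[OF refl], rule sum.swap)
  also have "\<dots> = (\<Sum>E\<in>Bs. hs_sqnorm E)"
    unfolding hs_sqnorm_def by (subst (2) sum.swap) (rule refl)
  also have "\<dots> = card Bs" using hs_sqnorm_orthonormal[OF assms(2)] by simp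
  finally show ?thesis by simp
qed

section \<open>Orthogonal projectors on V\<close>

lemma vinner_diff_right: "vinner x (y - z) = vinner x y - vinner x z"
  by (simp add: vinner_def algebra_simps sum_subtractf)

lemma vinner_cnj: "cnj (vinner x y) = vinner y x"
  by (simp add: vinner_def mult.commute)

lemma vinner_self_eq_0: "vinner x x = 0 \<Longrightarrow> x = 0"
proof -
  assume "vinner x x = 0"
  moreover have "vinner x x = complex_of_real (\<Sum>i\<in>UNIV. (cmod (x $ i))\<^sup>2)"
    by (simp add: vinner_def cnj_mult_self del: of_real_power)
  ultimately have "\<forall>i. (cmod (x $ i))\<^sup>2 = 0"
    by (simp add: sum_nonneg_eq_0_iff del: of_real_sum)
  then show "x = 0" by (simp add: cvec_eq_iff)
qed

lemma matrix_vector_mult_axis: "((A::complex^'n^'n) *v axis j 1) $ i = A $ i $ j"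
  by (simp add: matrix_vector_mult_def axis_def if_distrib cong: if_cong)

lemma vinner_axis_left: "vinner (axis i 1) y = y $ i"
  by (simp add: vinner_def axis_def if_distrib if_distribR cong: if_cong)

lemma vinner_axis_right: "vinner y (axis i 1) = cnj (y $ i)"
  by (simp add: vinner_def axis_def if_distrib if_distribR cong: if_cong)

locale orth_proj_onto =
  fixes C :: "(complex^'n) set" and P :: "complex^'n^'n"
  assumes subspace: "vec.subspace C" and proj: "orth_projector C P"
begin

lemma range_subset: "P *v v \<in> C"
  using proj unfolding orth_projector_def by blast

lemma residual_orthogonal: "w \<in> C \<Longrightarrow> vinner w (v - P *v v) = 0"
  using proj unfolding orth_projector_def by blast

lemma fixes_subspace:
  assumes "w \<in> C"
  shows "P *v w = w"
proof -
  have "w - P *v w \<in> C" using vec.subspace_diff[OF subspace assms range_subset] .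
  then have "vinner (w - P *v w) (w - P *v w) = 0" by (rule residual_orthogonal)
  then have "w - P *v w = 0" by (rule vinner_self_eq_0)
  then show ?thesis by simp
qed

lemma vinner_self_adjoint: "vinner u (P *v v) = vinner (P *v u) v"
proof -
  have compress: "vinner (P *v x) y = vinner (P *v x) (P *v y)" for x y
    using residual_orthogonal[OF range_subset, of x y] by (simp add: vinner_diff_right)
  have "vinner u (P *v v) = cnj (vinner (P *v v) u)" by (simp add: vinner_cnj)
  also have "\<dots> = cnj (vinner (P *v v) (P *v u))" using compress[of v u] by simp
  also have "\<dots> = vinner (P *v u) (P *v v)" by (simp add: vinner_cnj)
  also have "\<dots> = vinner (P *v u) v" using compress[of u v] by simp
  finally show ?thesis .
qed

lemma adjm_eq: "adjm P = P"
proof -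
  have "P $ i $ j = cnj (P $ j $ i)" for i j
    using vinner_self_adjoint[of "axis i 1" "axis j 1"]
    by (simp add: vinner_axis_left vinner_axis_right matrix_vector_mult_axis)
  then have "adjm P $ i $ j = P $ i $ j" for i j :: 'n by (metis adjm_nth)
  then show ?thesis by (simp add: cvec_eq_iff)
qed

lemma idempotent: "P ** P = P"
proof -
  have "(P ** P) *v axis j 1 = P *v axis j 1" for j
    using fixes_subspace[OF range_subset] by (simp add: matrix_vector_mul_assoc[symmetric])
  then have "(P ** P) $ i $ j = P $ i $ j" for i j :: 'n by (metis matrix_vector_mult_axis)
  then show ?thesis by (simp add: cvec_eq_iff)
qed

lemma trace_eq_dim: "trace P = of_nat (vec.dim C)"
proof -
  obtain Bs where Bs: "Bs \<subseteq> C" "vec.independent Bs" "C \<subseteq> vec.span Bs" "card Bs = vec.dim C"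
    using vec.basis_exists by blast
  have fin: "finite Bs" using vec.independent_bound_general[OF Bs(2)] by blast
  define R where "R v = vec.representation Bs (P *v v)" for v
  have in_span: "P *v v \<in> vec.span Bs" for v using range_subset Bs(3) by blast
  have expand: "P *v v = (\<Sum>b\<in>Bs. R v b *s b)" for v
    unfolding R_def by (rule vec.sum_representation_eq[symmetric, OF Bs(2) in_span fin order.refl])
  have "trace P = (\<Sum>i\<in>UNIV. (P *v axis i 1) $ i)" by (simp add: trace_def matrix_vector_mult_axis)
  also have "\<dots> = (\<Sum>b\<in>Bs. \<Sum>i\<in>UNIV. b $ i * R (axis i 1) b)"
    by (subst expand) (simp add: sum_component sum.swap[of _ UNIV] mult.commute)
  also have "\<dots> = (\<Sum>b\<in>Bs. 1)"
  proof (rule sum.cong[OF refl])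
    fix b assume b: "b \<in> Bs"
    have "(\<Sum>i\<in>UNIV. b $ i * R (axis i 1) b)
        = vec.representation Bs (\<Sum>i\<in>UNIV. b $ i *s (P *v axis i 1)) b"
      unfolding R_def
      by (simp add: vec.representation_sum[OF Bs(2)] vec.span_scale in_span
          vec.representation_scale[OF Bs(2) in_span])
    also have "(\<Sum>i\<in>UNIV. b $ i *s (P *v axis i 1)) = P *v b"
      by (simp add: cvec_eq_iff sum_component matrix_vector_mult_axis)
        (simp add: matrix_vector_mult_def mult.commute)
    also have "P *v b = b" using fixes_subspace b Bs(1) by blast
    finally show "(\<Sum>i\<in>UNIV. b $ i * R (axis i 1) b) = 1"
      using vec.representation_basis[OF Bs(2) b] by simp
  qed
  finally show ?thesis using Bs(4) by simp
qed

lemma hs_sqnorm_eq_dim: "hs_sqnorm P = real (vec.dim C)"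
proof -
  have "complex_of_real (hs_sqnorm P) = complex_of_real (real (vec.dim C))"
    by (simp add: hs_self[symmetric] hs_def adjm_eq idempotent trace_eq_dim)
  then show ?thesis by (simp only: of_real_eq_iff)
qed

end

section \<open>Twirls, intertwiners and eigenvectors\<close>

(* Hence Twirl B is determined by Proj B, and facts about Proj B (basis independence, resolution
   of the identity over the sectors) transfer to Twirl B. *)
lemma Twirl_nth_via_Proj:
  "Twirl Bs X $ i $ j = (\<Sum>l\<in>UNIV. \<Sum>k\<in>UNIV. X$k$l * Proj Bs (munit k i) $ l $ j)"
proof -
  have "Twirl Bs X $ i $ j = (\<Sum>E\<in>Bs. \<Sum>l\<in>UNIV. \<Sum>k\<in>UNIV. X$k$l * (cnj (E$k$i) * E$l$j))"
    by (simp add: Twirl_def sum_component matrix_mult_nth sum_distrib_left sum_distrib_right mult_ac)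
  also have "\<dots> = (\<Sum>l\<in>UNIV. \<Sum>k\<in>UNIV. X$k$l * (\<Sum>E\<in>Bs. cnj (E$k$i) * E$l$j))"
    by (simp only: sum.swap[of _ Bs] sum_distrib_left)
  also have "\<dots> = (\<Sum>l\<in>UNIV. \<Sum>k\<in>UNIV. X$k$l * Proj Bs (munit k i) $ l $ j)"
    by (simp add: Proj_def sum_component hs_munit)
  finally show ?thesis .
qed

lemma linear_op_Twirl: "linear_op (Twirl Bs)"
  by (simp add: linear_op_def Twirl_def matrix_add_ldistrib matrix_add_rdistrib sum.distrib
      mult_msc_mult msc_sum)

lemma Proj_unitary_conj:
  assumes U: "unitary_mat U"
  shows "Proj ((\<lambda>E. U ** E ** adjm U) ` Bs) (U ** X ** adjm U) = U ** Proj Bs X ** adjm U"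
proof -
  have "inj_on (\<lambda>E. U ** E ** adjm U) Bs"
    using inj_unitary_conj[OF U] by (rule inj_on_subset) simp
  then show ?thesis
    by (simp add: Proj_def sum.reindex hs_unitary_conj[OF U] mult_sum_mult mult_msc_mult)
qed

lemma Twirl_unitary_conj:
  assumes U: "unitary_mat U"
  shows "Twirl ((\<lambda>E. U ** E ** adjm U) ` Bs) (U ** X ** adjm U) = U ** Twirl Bs X ** adjm U"
proof -
  have "inj_on (\<lambda>E. U ** E ** adjm U) Bs"
    using inj_unitary_conj[OF U] by (rule inj_on_subset) simp
  then show ?thesis
    by (simp add: Twirl_def sum.reindex adjm_mult matrix_mul_assoc unitary_cancel(1)[OF U]
        mult_sum_mult)
qed

definition intertwiner ::
    "('g, 'b) monoid_scheme \<Rightarrow> ('g \<Rightarrow> complex^'n^'n) \<Rightarrow> (complex^'n^'n \<Rightarrow> complex^'n^'n) \<Rightarrow> bool" where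
  "intertwiner G \<rho> T \<longleftrightarrow>
     linear_op T \<and> (\<forall>g\<in>carrier G. \<forall>X. T (conj_act \<rho> g X) = conj_act \<rho> g (T X))"

lemma intertwiner_comp: "intertwiner G \<rho> S \<Longrightarrow> intertwiner G \<rho> T \<Longrightarrow> intertwiner G \<rho> (S \<circ> T)"
  by (simp add: intertwiner_def linear_op_comp)

lemma linear_op_conj_act: "linear_op (conj_act \<rho> g)"
  by (simp add: linear_op_def conj_act_def matrix_add_ldistrib matrix_add_rdistrib mult_msc_mult)

lemma eigenspace_invariant_subspace:
  assumes E: "csubspace E" "invariant G \<rho> E" and L: "intertwiner G \<rho> L"
  shows "csubspace {Y \<in> E. L Y = msc lam Y}" and "invariant G \<rho> {Y \<in> E. L Y = msc lam Y}"
proof -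
  have lin: "linear_op L" using L by (simp add: intertwiner_def)
  show "csubspace {Y \<in> E. L Y = msc lam Y}"
    using E(1) by (auto simp: csubspace_def linear_opD[OF lin] msc_add msc_msc mult.commute)
  show "invariant G \<rho> {Y \<in> E. L Y = msc lam Y}"
    using E(2) L by (auto simp: invariant_def intertwiner_def linear_opD(2)[OF linear_op_conj_act])
qed

lemma image_invariant_subspace:
  assumes E: "csubspace E" "invariant G \<rho> E" and L: "intertwiner G \<rho> L"
  shows "csubspace (L ` E)" and "invariant G \<rho> (L ` E)"
proof -
  have lin: "linear_op L" using L by (simp add: intertwiner_def)
  show "csubspace (L ` E)"
    unfolding csubspace_def
  proof (intro conjI ballI allI, safe)
    show "0 \<in> L ` E" using E(1) linear_opD(3)[OF lin] by (metis csubspace_def image_eqI)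
    show "L X + L Y \<in> L ` E" if "X \<in> E" "Y \<in> E" for X Y
      using that E(1) linear_opD(1)[OF lin] by (metis csubspace_def image_eqI)
    show "msc c (L X) \<in> L ` E" if "X \<in> E" for c X
      using that E(1) linear_opD(2)[OF lin] by (metis csubspace_def image_eqI)
  qed
  show "invariant G \<rho> (L ` E)"
    unfolding invariant_def
  proof (intro ballI)
    fix g Y assume g: "g \<in> carrier G" and "Y \<in> L ` E"
    then obtain X where X: "X \<in> E" "Y = L X" by blast
    have "conj_act \<rho> g Y = L (conj_act \<rho> g X)" using L g X(2) by (simp add: intertwiner_def)
    moreover have "conj_act \<rho> g X \<in> E" using E(2) g X(1) by (simp add: invariant_def)
    ultimately show "conj_act \<rho> g Y \<in> L ` E" by blast
  qed
qed

lemma orthonormal_basis_enumerate: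
  assumes onb: "orthonormal_basis_of Bs E"
  obtains bs where "set bs = Bs" and "\<And>j. j < length bs \<Longrightarrow> bs ! j \<in> E"
    and "\<And>i j. i < length bs \<Longrightarrow> j < length bs \<Longrightarrow> hs (bs ! i) (bs ! j) = (if i = j then 1 else 0)"
    and "\<And>Z. Z \<in> E \<Longrightarrow> Z = (\<Sum>i<length bs. msc (hs (bs ! i) Z) (bs ! i))"
proof -
  obtain bs where bs: "set bs = Bs" "distinct bs"
    using finite_distinct_list[OF orthonormal_basis_ofD(1)[OF onb]] by blast
  have "bs ! j \<in> E" if "j < length bs" for j
    using that bs(1) orthonormal_basis_ofD(3)[OF onb] nth_mem by blast
  moreover have "hs (bs ! i) (bs ! j) = (if i = j then 1 else 0)"
    if "i < length bs" "j < length bs" for i j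
    using that orthonormal_basis_ofD(2)[OF onb] bs nth_mem nth_eq_iff_index_eq
    unfolding orthonormal_def by metis
  moreover have "Z = (\<Sum>i<length bs. msc (hs (bs ! i) Z) (bs ! i))" if "Z \<in> E" for Z
  proof -
    have "Z \<in> cspan Bs" using that orthonormal_basis_ofD(4)[OF onb] by blast
    then have "Z = Proj Bs Z"
      using Proj_cspan[OF orthonormal_basis_ofD(1,2)[OF onb]] by simp
    also have "\<dots> = (\<Sum>i<length bs. msc (hs (bs ! i) Z) (bs ! i))"
      unfolding Proj_def
      by (rule sum.reindex_bij_betw[symmetric], rule bij_betw_nth) (auto simp: bs)
    finally show ?thesis .
  qed
  ultimately show thesis by (rule that[OF bs(1)])
qed

lemma linear_op_has_eigenvector:
  assumes onb: "orthonormal_basis_of Bs E" and E: "csubspace E" and ne: "Bs \<noteq> {}"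
    and L: "linear_op L" and maps: "\<forall>X\<in>E. L X \<in> E"
  shows "\<exists>lam Y. Y \<in> E \<and> Y \<noteq> 0 \<and> L Y = msc lam Y"
proof -
  obtain bs where bs: "set bs = Bs" and bs_in: "\<And>j. j < length bs \<Longrightarrow> bs ! j \<in> E"
    and hs_bs: "\<And>i j. i < length bs \<Longrightarrow> j < length bs \<Longrightarrow>
      hs (bs ! i) (bs ! j) = (if i = j then 1 else 0)"
    and expand: "\<And>Z. Z \<in> E \<Longrightarrow> Z = (\<Sum>i<length bs. msc (hs (bs ! i) Z) (bs ! i))"
    using orthonormal_basis_enumerate[OF onb] by blast
  let ?d = "length bs"
  have "0 < ?d" using ne bs by auto
  then obtain lam v where v: "\<exists>i<?d. v i \<noteq> 0"
      "\<forall>i<?d. (\<Sum>j<?d. hs (bs ! i) (L (bs ! j)) * v j) = lam * v i"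
    using complex_matrix_has_eigenvector[of ?d "\<lambda>i j. hs (bs ! i) (L (bs ! j))"] by blast
  define Y where "Y = (\<Sum>j<?d. msc (v j) (bs ! j))"
  have hs_Y: "hs (bs ! i) Y = v i" if "i < ?d" for i
  proof -
    have "hs (bs ! i) Y = (\<Sum>j<?d. v j * hs (bs ! i) (bs ! j))"
      by (simp add: Y_def hs_sum_right hs_msc_right)
    also have "\<dots> = (\<Sum>j<?d. if j = i then v i else 0)"
      by (rule sum.cong[OF refl]) (simp add: hs_bs that)
    finally show ?thesis using that by simp
  qed
  have Y_in: "Y \<in> E"
    unfolding Y_def using E bs_in by (intro csubspace_sum) (auto simp: csubspace_def)
  moreover have "Y \<noteq> 0" using v(1) hs_Y by force
  moreover have "L Y = msc lam Y"
  proof -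
    have hs_LY: "hs (bs ! i) (L Y) = lam * v i" if "i < ?d" for i
    proof -
      have "hs (bs ! i) (L Y) = (\<Sum>j<?d. hs (bs ! i) (L (bs ! j)) * v j)"
        by (simp add: Y_def linear_op_sum[OF L] linear_opD(2)[OF L] hs_sum_right hs_msc_right
            mult.commute)
      then show ?thesis using v(2) that by simp
    qed
    have "L Y = (\<Sum>i<?d. msc (hs (bs ! i) (L Y)) (bs ! i))"
      using expand maps Y_in by blast
    also have "\<dots> = (\<Sum>i<?d. msc lam (msc (v i) (bs ! i)))"
      by (rule sum.cong[OF refl]) (simp add: hs_LY msc_msc)
    also have "\<dots> = msc lam Y" by (simp add: Y_def msc_sum)
    finally show ?thesis .
  qed
  ultimately show ?thesis by blast
qed

section \<open>The sector decomposition and Schur's lemma\<close>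

locale sector_decomposition =
  fixes G :: "('g, 'b) monoid_scheme" and \<rho> :: "'g \<Rightarrow> complex^'n^'n"
    and Esp :: "'x::finite \<Rightarrow> (complex^'n^'n) set" and B :: "'x \<Rightarrow> (complex^'n^'n) set"
  assumes rep: "unitary_rep G \<rho>"
    and decomp: "multiplicity_free_decomp G \<rho> Esp"
    and onb: "\<And>\<xi>. orthonormal_basis_of (B \<xi>) (Esp \<xi>)"
begin

lemma sector_irreducible: "irreducible_subrep G \<rho> (Esp \<xi>)"
  using decomp by (simp add: multiplicity_free_decomp_def)

lemma sectors_orthogonal: "\<xi> \<noteq> \<eta> \<Longrightarrow> X \<in> Esp \<xi> \<Longrightarrow> Y \<in> Esp \<eta> \<Longrightarrow> hs X Y = 0"
  using decomp by (simp add: multiplicity_free_decomp_def)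

lemma sectors_not_isomorphic: "\<xi> \<noteq> \<eta> \<Longrightarrow> \<not> isomorphic_subreps G \<rho> (Esp \<xi>) (Esp \<eta>)"
  using decomp by (simp add: multiplicity_free_decomp_def)

lemma sectors_span: "\<exists>f. (\<forall>\<xi>. f \<xi> \<in> Esp \<xi>) \<and> X = (\<Sum>\<xi>\<in>UNIV. f \<xi>)"
  using decomp by (simp add: multiplicity_free_decomp_def)

lemma sector_subspace: "csubspace (Esp \<xi>)"
  using sector_irreducible by (simp add: irreducible_subrep_def)

lemma sector_nonzero: "Esp \<xi> \<noteq> {0}"
  using sector_irreducible by (simp add: irreducible_subrep_def)

lemma sector_invariant: "invariant G \<rho> (Esp \<xi>)"
  using sector_irreducible by (simp add: irreducible_subrep_def)

lemma sector_minimal: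
  "csubspace W \<Longrightarrow> W \<subseteq> Esp \<xi> \<Longrightarrow> invariant G \<rho> W \<Longrightarrow> W = {0} \<or> W = Esp \<xi>"
  using sector_irreducible[of \<xi>] unfolding irreducible_subrep_def by blast

lemma basis_finite: "finite (B \<xi>)"
  by (rule orthonormal_basis_ofD(1)[OF onb])

lemma basis_orthonormal: "orthonormal (B \<xi>)"
  by (rule orthonormal_basis_ofD(2)[OF onb])

lemma basis_subset: "B \<xi> \<subseteq> Esp \<xi>"
  by (rule orthonormal_basis_ofD(3)[OF onb])

lemma basis_nonempty: "B \<xi> \<noteq> {}"
  by (rule orthonormal_basis_nonempty[OF onb sector_nonzero sector_subspace])

lemma sector_conj_closed: "g \<in> carrier G \<Longrightarrow> Y \<in> Esp \<xi> \<Longrightarrow> conj_act \<rho> g Y \<in> Esp \<xi>"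
  using sector_invariant unfolding invariant_def by blast

lemma Proj_sector_id:
  assumes "orthonormal_basis_of B' (Esp \<xi>)" and "Y \<in> Esp \<xi>"
  shows "Proj B' Y = Y"
  using Proj_cspan[OF orthonormal_basis_ofD(1,2)[OF assms(1)]]
    orthonormal_basis_ofD(4)[OF assms(1)] assms(2)
  by blast

lemma Proj_other_sector:
  assumes "orthonormal_basis_of B' (Esp \<xi>)" and "\<eta> \<noteq> \<xi>" and "Y \<in> Esp \<eta>"
  shows "Proj B' Y = 0"
  using assms orthonormal_basis_ofD(3)[OF assms(1)] sectors_orthogonal[of \<xi> \<eta>]
  by (intro Proj_eq_0_if_orthogonal) blast

lemma Proj_sector_component:
  assumes "orthonormal_basis_of B' (Esp \<xi>)" and "\<forall>\<eta>. f \<eta> \<in> Esp \<eta>"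
  shows "Proj B' (\<Sum>\<eta>\<in>UNIV. f \<eta>) = f \<xi>"
proof -
  have "Proj B' (\<Sum>\<eta>\<in>UNIV. f \<eta>) = (\<Sum>\<eta>\<in>UNIV. Proj B' (f \<eta>))"
    by (rule linear_op_sum[OF linear_op_Proj])
  also have "\<dots> = (\<Sum>\<eta>\<in>UNIV. if \<eta> = \<xi> then f \<xi> else 0)"
    using assms by (intro sum.cong) (auto simp: Proj_sector_id Proj_other_sector)
  finally show ?thesis by simp
qed

lemma Proj_in_sector: "Proj (B \<xi>) X \<in> Esp \<xi>"
  using cspan_subset[OF sector_subspace basis_subset] Proj_in_cspan[OF basis_finite] by blast

lemma sum_Proj_sectors: "(\<Sum>\<xi>\<in>UNIV. Proj (B \<xi>) X) = X"
proof -
  obtain f where f: "\<forall>\<xi>. f \<xi> \<in> Esp \<xi>" "X = (\<Sum>\<xi>\<in>UNIV. f \<xi>)" using sectors_span by blast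
  then show ?thesis using Proj_sector_component[OF onb f(1)] by simp
qed

lemma Proj_basis_independent:
  assumes "orthonormal_basis_of B' (Esp \<xi>)"
  shows "Proj B' X = Proj (B \<xi>) X"
  using Proj_sector_component[OF assms, of "\<lambda>\<eta>. Proj (B \<eta>) X"]
  by (simp add: Proj_in_sector sum_Proj_sectors)

lemma Twirl_basis_independent:
  assumes "orthonormal_basis_of B' (Esp \<xi>)"
  shows "Twirl B' X = Twirl (B \<xi>) X"
  by (simp add: cvec_eq_iff Twirl_nth_via_Proj Proj_basis_independent[OF assms])

lemma sum_Twirl_sectors: "(\<Sum>\<xi>\<in>UNIV. Twirl (B \<xi>) X) = msc (trace X) Imat"
proof -
  have "(\<Sum>\<xi>\<in>UNIV. Twirl (B \<xi>) X) $ i $ j = msc (trace X) Imat $ i $ j" for i j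
  proof -
    have "(\<Sum>\<xi>\<in>UNIV. Twirl (B \<xi>) X) $ i $ j
        = (\<Sum>\<xi>\<in>UNIV. \<Sum>l\<in>UNIV. \<Sum>k\<in>UNIV. X$k$l * Proj (B \<xi>) (munit k i) $ l $ j)"
      by (simp add: sum_component Twirl_nth_via_Proj)
    also have "\<dots> = (\<Sum>l\<in>UNIV. \<Sum>k\<in>UNIV. X$k$l * (\<Sum>\<xi>\<in>UNIV. Proj (B \<xi>) (munit k i)) $ l $ j)"
      by (simp only: sum.swap[where A="UNIV :: 'x set"] sum_component sum_distrib_left)
    also have "\<dots> = (\<Sum>l\<in>UNIV. \<Sum>k\<in>UNIV. if k = l then (if i = j then X$l$l else 0) else 0)"
      unfolding sum_Proj_sectors by (intro sum.cong) (auto simp: munit_nth)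
    also have "\<dots> = msc (trace X) Imat $ i $ j" by (simp add: trace_def Imat_nth)
    finally show ?thesis .
  qed
  then show ?thesis by (simp add: cvec_eq_iff)
qed

lemma hs_Proj_orthogonal: "\<xi> \<noteq> \<eta> \<Longrightarrow> hs (Proj (B \<xi>) X) (Proj (B \<eta>) Y) = 0"
  by (rule sectors_orthogonal[OF _ Proj_in_sector Proj_in_sector])

lemma sum_hs_Proj_sectors: "(\<Sum>\<xi>\<in>UNIV. hs X (Proj (B \<xi>) Y)) = hs X Y"
  by (simp add: hs_sum_right[symmetric] sum_Proj_sectors)

lemma orthonormal_basis_conj:
  assumes g: "g \<in> carrier G"
  shows "orthonormal_basis_of ((\<lambda>E. \<rho> g ** E ** adjm (\<rho> g)) ` B \<xi>) (Esp \<xi>)"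
proof -
  let ?c = "\<lambda>E. \<rho> g ** E ** adjm (\<rho> g)"
  have U: "unitary_mat (\<rho> g)" by (rule unitary_repD(2)[OF rep g])
  have "finite (?c ` B \<xi>)" using basis_finite by simp
  moreover have "orthonormal (?c ` B \<xi>)"
    using basis_orthonormal[of \<xi>]
    by (auto simp: orthonormal_def hs_unitary_conj[OF U] inj_eq[OF inj_unitary_conj[OF U]])
  moreover have "?c ` B \<xi> \<subseteq> Esp \<xi>"
    using basis_subset sector_conj_closed[OF g] by (auto simp: conj_act_def)
  moreover have "Esp \<xi> \<subseteq> cspan (?c ` B \<xi>)"
  proof
    fix Y assume Y: "Y \<in> Esp \<xi>"
    define Y' where "Y' = adjm (\<rho> g) ** Y ** \<rho> g"
    have "inv\<^bsub>G\<^esub> g \<in> carrier G" using unitary_repD(1)[OF rep] g by (simp add: group.inv_closed)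
    from sector_conj_closed[OF this Y] have Y': "Y' \<in> Esp \<xi>"
      by (simp add: conj_act_def unitary_rep_inv[OF rep g] Y'_def)
    have Y_eq: "Y = ?c Y'"
      by (simp add: Y'_def matrix_mul_assoc unitary_cancel[OF U] unitary_mult_adjm[OF U])
    have "Proj (?c ` B \<xi>) Y = ?c (Proj (B \<xi>) Y')"
      unfolding Y_eq by (rule Proj_unitary_conj[OF U])
    also have "\<dots> = Y" using Proj_sector_id[OF onb Y'] Y_eq by simp
    finally show "Y \<in> cspan (?c ` B \<xi>)"
      using Proj_in_cspan[OF \<open>finite (?c ` B \<xi>)\<close>, of Y] by simp
  qed
  ultimately show ?thesis by (simp add: orthonormal_basis_of_def orthonormal_def)
qed

(* Conjugation by \<rho> g carries B \<xi> to another orthonormal basis of the same sector, and neither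
   Proj nor Twirl depends on the choice of that basis. *)
lemma intertwiner_Proj: "intertwiner G \<rho> (Proj (B \<xi>))"
proof -
  have "Proj (B \<xi>) (conj_act \<rho> g X) = conj_act \<rho> g (Proj (B \<xi>) X)" if g: "g \<in> carrier G" for g X
    using Proj_basis_independent[OF orthonormal_basis_conj[OF g], symmetric]
      Proj_unitary_conj[OF unitary_repD(2)[OF rep g]]
    by (simp add: conj_act_def)
  then show ?thesis by (simp add: intertwiner_def linear_op_Proj)
qed

lemma intertwiner_Twirl: "intertwiner G \<rho> (Twirl (B \<xi>))"
proof -
  have "Twirl (B \<xi>) (conj_act \<rho> g X) = conj_act \<rho> g (Twirl (B \<xi>) X)" if g: "g \<in> carrier G" for g X
    using Twirl_basis_independent[OF orthonormal_basis_conj[OF g], symmetric]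
      Twirl_unitary_conj[OF unitary_repD(2)[OF rep g]]
    by (simp add: conj_act_def)
  then show ?thesis by (simp add: intertwiner_def linear_op_Twirl)
qed

(* Kernel and image are subrepresentations, so a nonzero L would be an isomorphism between two
   distinct sectors. *)
lemma intertwiner_vanishes_between_sectors:
  assumes L: "intertwiner G \<rho> L" and range: "\<forall>X. L X \<in> Esp \<eta>" and "\<sigma> \<noteq> \<eta>"
    and Y: "Y \<in> Esp \<sigma>"
  shows "L Y = 0"
proof -
  have lin: "linear_op L" using L by (simp add: intertwiner_def)
  let ?W = "{Y \<in> Esp \<sigma>. L Y = msc 0 Y}"
  have "?W = {0} \<or> ?W = Esp \<sigma>"
    using sector_minimal eigenspace_invariant_subspace[OF sector_subspace sector_invariant L] by blast
  moreover have "?W \<noteq> {0}"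
  proof
    assume ker: "?W = {0}"
    have "inj_on L (Esp \<sigma>)"
    proof (rule inj_onI)
      fix Y1 Y2 assume Y: "Y1 \<in> Esp \<sigma>" "Y2 \<in> Esp \<sigma>" and eq: "L Y1 = L Y2"
      have "Y1 + msc (-1) Y2 \<in> Esp \<sigma>" using sector_subspace[of \<sigma>] Y by (simp add: csubspace_def)
      moreover have "L (Y1 + msc (-1) Y2) = 0"
        using eq by (simp only: linear_opD[OF lin]) (simp add: msc_minus_one)
      ultimately have "Y1 + msc (-1) Y2 \<in> ?W" by simp
      then have "Y1 + msc (-1) Y2 = 0" using ker by blast
      then show "Y1 = Y2" by (simp add: msc_minus_one)
    qed
    moreover have "L ` Esp \<sigma> = Esp \<eta>"
    proof -
      obtain Y0 where "Y0 \<in> Esp \<sigma>" "Y0 \<noteq> 0"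
        using sector_nonzero[of \<sigma>] sector_subspace[of \<sigma>] unfolding csubspace_def by blast
      then have "L ` Esp \<sigma> \<noteq> {0}" using ker by auto
      then show ?thesis
        using sector_minimal image_invariant_subspace[OF sector_subspace sector_invariant L] range
        by blast
    qed
    ultimately have "bij_betw L (Esp \<sigma>) (Esp \<eta>)" by (simp add: bij_betw_def)
    then have "isomorphic_subreps G \<rho> (Esp \<sigma>) (Esp \<eta>)"
      using L linear_opD[OF lin] unfolding isomorphic_subreps_def intertwiner_def by blast
    then show False using sectors_not_isomorphic[OF \<open>\<sigma> \<noteq> \<eta>\<close>] by blast
  qed
  ultimately show ?thesis using Y by auto
qed

lemma intertwiner_scalar_on_sector:
  assumes L: "intertwiner G \<rho> L" and range: "\<forall>X. L X \<in> Esp \<sigma>"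
  shows "\<exists>lam. \<forall>Y\<in>Esp \<sigma>. L Y = msc lam Y"
proof -
  obtain lam Y0 where Y0: "Y0 \<in> Esp \<sigma>" "Y0 \<noteq> 0" "L Y0 = msc lam Y0"
    using linear_op_has_eigenvector[OF onb sector_subspace basis_nonempty] L range
    unfolding intertwiner_def by blast
  let ?W = "{Y \<in> Esp \<sigma>. L Y = msc lam Y}"
  have "?W = {0} \<or> ?W = Esp \<sigma>"
    using sector_minimal eigenspace_invariant_subspace[OF sector_subspace sector_invariant L] by blast
  then have "?W = Esp \<sigma>" using Y0 by blast
  then show ?thesis by blast
qed

theorem intertwiner_diagonal:
  assumes T: "intertwiner G \<rho> T"
  shows "\<exists>lam. \<forall>X. T X = (\<Sum>\<sigma>\<in>UNIV. msc (lam \<sigma>) (Proj (B \<sigma>) X))"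
proof -
  have L: "intertwiner G \<rho> (Proj (B \<sigma>) \<circ> T)" for \<sigma>
    by (rule intertwiner_comp[OF intertwiner_Proj T])
  have "\<exists>l. \<forall>Y\<in>Esp \<sigma>. Proj (B \<sigma>) (T Y) = msc l Y" for \<sigma>
    using intertwiner_scalar_on_sector[OF L] Proj_in_sector by simp
  then obtain lam where lam: "\<forall>\<sigma>. \<forall>Y\<in>Esp \<sigma>. Proj (B \<sigma>) (T Y) = msc (lam \<sigma>) Y"
    using choice[of "\<lambda>\<sigma> l. \<forall>Y\<in>Esp \<sigma>. Proj (B \<sigma>) (T Y) = msc l Y"] by blast
  have off: "Proj (B \<eta>) (T Y) = 0" if "Y \<in> Esp \<sigma>" "\<sigma> \<noteq> \<eta>" for Y \<sigma> \<eta>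
    using intertwiner_vanishes_between_sectors[of "Proj (B \<eta>) \<circ> T" \<eta> \<sigma> Y, OF L] that
    by (simp add: Proj_in_sector)
  have TY: "T Y = msc (lam \<sigma>) Y" if Y: "Y \<in> Esp \<sigma>" for Y \<sigma>
  proof -
    have "T Y = (\<Sum>\<eta>\<in>UNIV. Proj (B \<eta>) (T Y))" by (rule sum_Proj_sectors[symmetric])
    also have "\<dots> = (\<Sum>\<eta>\<in>UNIV. if \<eta> = \<sigma> then msc (lam \<sigma>) Y else 0)"
      using lam Y off by (intro sum.cong) auto
    finally show ?thesis by simp
  qed
  have "T X = (\<Sum>\<sigma>\<in>UNIV. msc (lam \<sigma>) (Proj (B \<sigma>) X))" for X
  proof -
    have "T X = T (\<Sum>\<sigma>\<in>UNIV. Proj (B \<sigma>) X)" by (simp add: sum_Proj_sectors)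
    also have "\<dots> = (\<Sum>\<sigma>\<in>UNIV. T (Proj (B \<sigma>) X))"
      using T by (simp add: intertwiner_def linear_op_sum)
    finally
    show ?thesis by (simp add: TY[OF Proj_in_sector])
  qed
  then show ?thesis by blast
qed

lemma MacW_eq_eigenvalue:
  assumes lam: "\<forall>X. Twirl (B \<xi>) X = (\<Sum>\<sigma>\<in>UNIV. msc (lam \<sigma>) (Proj (B \<sigma>) X))"
  shows "MacW B \<xi> \<sigma> = lam \<sigma>"
proof -
  have "hs (Proj (B \<sigma>) Y) (Twirl (B \<xi>) Y) = lam \<sigma> * hs (Proj (B \<sigma>) Y) (Proj (B \<sigma>) Y)" for Y
  proof -
    have "hs (Proj (B \<sigma>) Y) (Twirl (B \<xi>) Y)
        = (\<Sum>\<eta>\<in>UNIV. lam \<eta> * hs (Proj (B \<sigma>) Y) (Proj (B \<eta>) Y))"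
      by (simp add: lam hs_sum_right hs_msc_right)
    also have "\<dots> = (\<Sum>\<eta>\<in>UNIV. if \<eta> = \<sigma> then lam \<sigma> * hs (Proj (B \<sigma>) Y) (Proj (B \<sigma>) Y) else 0)"
      by (intro sum.cong) (auto simp: hs_Proj_orthogonal)
    finally show ?thesis by simp
  qed
  then have "sop_inner (Proj (B \<sigma>)) (Twirl (B \<xi>)) = lam \<sigma> * sop_inner (Proj (B \<sigma>)) (Proj (B \<sigma>))"
    by (simp add: sop_inner_def sum_distrib_left)
  also have "\<dots> = lam \<sigma> * of_nat (card (B \<sigma>))"
    by (simp add: sop_inner_Proj_self[OF basis_finite basis_orthonormal])
  finally show ?thesis
    using basis_finite basis_nonempty by (simp add: MacW_def)
qed

theorem Twirl_MacWilliams: "Twirl (B \<xi>) X = (\<Sum>\<sigma>\<in>UNIV. msc (MacW B \<xi> \<sigma>) (Proj (B \<sigma>) X))"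
proof -
  obtain lam where lam: "\<forall>X. Twirl (B \<xi>) X = (\<Sum>\<sigma>\<in>UNIV. msc (lam \<sigma>) (Proj (B \<sigma>) X))"
    using intertwiner_diagonal[OF intertwiner_Twirl] by blast
  then have "MacW B \<xi> \<sigma> = lam \<sigma>" for \<sigma> by (rule MacW_eq_eigenvalue)
  then show ?thesis using lam by simp
qed

end

section \<open>The enumerators of a projector\<close>

(* The enumerators A_\<xi>(P,P) and B_\<xi>(P,P), in manifestly real form. *)
definition enum_A :: "(complex^'n^'n) set \<Rightarrow> complex^'n^'n \<Rightarrow> real" where
  "enum_A Bs P = (\<Sum>E\<in>Bs. (cmod (hs E P))\<^sup>2)"

definition enum_B :: "(complex^'n^'n) set \<Rightarrow> complex^'n^'n \<Rightarrow> real" where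
  "enum_B Bs P = (\<Sum>E\<in>Bs. hs_sqnorm (P ** E ** P))"

lemma detects_subset: "detects P F \<Longrightarrow> F' \<subseteq> F \<Longrightarrow> detects P F'"
  by (auto simp: detects_def)

lemma hs_Proj_eq_enum_A: "hs P (Proj Bs P) = complex_of_real (enum_A Bs P)"
  by (simp add: enum_A_def hs_Proj_self)

lemma enum_A_nonneg: "0 \<le> enum_A Bs P"
  by (simp add: enum_A_def sum_nonneg)

lemma hs_sqnorm_msc: "hs_sqnorm (msc c X) = (cmod c)\<^sup>2 * hs_sqnorm X"
  by (simp add: hs_sqnorm_def norm_mult power_mult_distrib sum_distrib_left)

context
  fixes P :: "complex^'n^'n"
  assumes self_adjoint: "adjm P = P" and idempotent: "P ** P = P"
begin

lemma mult_idempotent: "A ** P ** P = A ** P"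
  by (simp add: matrix_mul_assoc[symmetric] idempotent)

lemma hs_compress: "hs E P = hs (P ** E ** P) P"
proof -
  have "hs (P ** E ** P) P = trace (P ** (adjm E ** P))"
    by (simp add: hs_def adjm_mult self_adjoint matrix_mul_assoc mult_idempotent)
  also have "\<dots> = trace (adjm E ** P ** P)" by (rule trace_mul_sym)
  also have "\<dots> = hs E P" by (simp add: hs_def mult_idempotent)
  finally show ?thesis by simp
qed

lemma hs_sandwich: "hs P (adjm E ** P ** E) = hs (P ** E ** P) (P ** E ** P)"
proof -
  have "hs (P ** E ** P) (P ** E ** P) = trace ((P ** adjm E ** P ** E) ** P)"
    by (simp add: hs_def adjm_mult self_adjoint matrix_mul_assoc mult_idempotent)
  also have "\<dots> = trace (P ** (P ** adjm E ** P ** E))" by (rule trace_mul_sym)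
  also have "\<dots> = hs P (adjm E ** P ** E)"
    by (simp add: hs_def self_adjoint matrix_mul_assoc idempotent)
  finally show ?thesis by simp
qed

lemma hs_Twirl_eq_enum_B: "hs P (Twirl Bs P) = complex_of_real (enum_B Bs P)"
  by (simp add: Twirl_def hs_sum_right enum_B_def hs_sandwich hs_self)

lemma enum_A_le_enum_B: "enum_A Bs P \<le> hs_sqnorm P * enum_B Bs P"
proof -
  have "(cmod (hs E P))\<^sup>2 \<le> hs_sqnorm P * hs_sqnorm (P ** E ** P)" for E
    using hs_Cauchy_Schwarz[of "P ** E ** P" P] by (simp add: hs_compress[of E] mult.commute)
  then show ?thesis unfolding enum_A_def enum_B_def sum_distrib_left by (rule sum_mono)
qed

lemma enum_A_eq_enum_B_if_detects:
  assumes "detects P Bs"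
  shows "enum_A Bs P = hs_sqnorm P * enum_B Bs P"
  unfolding enum_A_def enum_B_def sum_distrib_left
proof (rule sum.cong[OF refl])
  fix E assume "E \<in> Bs"
  then obtain c where c: "P ** E ** P = msc c P" using assms unfolding detects_def by blast
  have "hs E P = cnj c * complex_of_real (hs_sqnorm P)"
    by (simp add: hs_compress[of E] c hs_msc_left hs_self)
  then show "(cmod (hs E P))\<^sup>2 = hs_sqnorm P * hs_sqnorm (P ** E ** P)"
    by (simp add: c hs_sqnorm_msc norm_mult power_mult_distrib power2_eq_square)
qed

end

lemma (in sector_decomposition) sum_enum_B:
  assumes "adjm P = P" and "P ** P = P"
  shows "(\<Sum>\<xi>\<in>UNIV. enum_B (B \<xi>) P) = (hs_sqnorm P)\<^sup>2"
proof -
  have trace_P: "trace P = complex_of_real (hs_sqnorm P)"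
    using hs_self[of P] by (simp add: hs_def assms)
  have "complex_of_real (\<Sum>\<xi>\<in>UNIV. enum_B (B \<xi>) P) = hs P (\<Sum>\<xi>\<in>UNIV. Twirl (B \<xi>) P)"
    by (simp add: hs_Twirl_eq_enum_B[OF assms] hs_sum_right)
  also have "\<dots> = trace P * hs P Imat" by (simp add: sum_Twirl_sectors hs_msc_right)
  also have "\<dots> = complex_of_real ((hs_sqnorm P)\<^sup>2)"
    by (simp add: hs_def assms(1) trace_P power2_eq_square)
  finally show ?thesis by (simp only: of_real_eq_iff)
qed

lemma (in sector_decomposition) sum_enum_A: "(\<Sum>\<xi>\<in>UNIV. enum_A (B \<xi>) X) = hs_sqnorm X"
proof -
  have "complex_of_real (\<Sum>\<xi>\<in>UNIV. enum_A (B \<xi>) X) = complex_of_real (hs_sqnorm X)"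
    by (simp add: hs_Proj_eq_enum_A[symmetric] sum_hs_Proj_sectors hs_self)
  then show ?thesis by (simp only: of_real_eq_iff)
qed

theorem mainTheorem7:
  fixes G :: "('g, 'b) monoid_scheme"
    and \<rho> :: "'g \<Rightarrow> complex^'n^'n"
    and Esp :: "'x::finite \<Rightarrow> (complex^'n^'n) set"
    and B :: "'x \<Rightarrow> (complex^'n^'n) set"
    and C :: "(complex^'n) set"
    and P :: "complex^'n^'n"
    and K :: nat
    and S :: "'x set"
  assumes rep: "unitary_rep G \<rho>"
    and decomp: "multiplicity_free_decomp G \<rho> Esp"
    and onb: "\<And>\<xi>. orthonormal_basis_of (B \<xi>) (Esp \<xi>)"
    and C_sub: "vec.subspace C"
    and C_dim: "vec.dim C = K"
    and P_proj: "orth_projector C P"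
    and det: "\<And>\<xi>. \<xi> \<in> S \<Longrightarrow> detects P (Esp \<xi>)"
  shows "\<exists>A Bw :: 'x \<Rightarrow> real.
           (\<forall>\<xi>. complex_of_real (A \<xi>) = hs P (Proj (B \<xi>) P)) \<and>
           (\<forall>\<xi>. complex_of_real (Bw \<xi>) = hs P (Twirl (B \<xi>) P)) \<and>
           (\<forall>\<xi>. A \<xi> \<ge> 0) \<and>
           (\<forall>\<xi>. A \<xi> \<le> real K * Bw \<xi>) \<and>
           (\<Sum>\<xi>\<in>UNIV. A \<xi>) = real K \<and>
           (\<Sum>\<xi>\<in>UNIV. Bw \<xi>) = real K ^ 2 \<and>
           (\<forall>\<xi>. complex_of_real (Bw \<xi>) = (\<Sum>\<rho>'\<in>UNIV. MacW B \<xi> \<rho>' * complex_of_real (A \<rho>'))) \<and>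
           (\<forall>\<xi>\<in>S. A \<xi> = real K * Bw \<xi>)"
proof -
  interpret P: orth_proj_onto C P by (rule orth_proj_onto.intro[OF C_sub P_proj])
  interpret sector_decomposition G \<rho> Esp B by (rule sector_decomposition.intro[OF rep decomp onb])
  note sa = P.adjm_eq and idem = P.idempotent
  have norm_P: "hs_sqnorm P = real K" using P.hs_sqnorm_eq_dim C_dim by simp
  define A where "A \<xi> = enum_A (B \<xi>) P" for \<xi>
  define Bw where "Bw \<xi> = enum_B (B \<xi>) P" for \<xi>
  have A_hs: "complex_of_real (A \<xi>) = hs P (Proj (B \<xi>) P)" for \<xi>
    by (simp add: A_def hs_Proj_eq_enum_A)
  have Bw_hs: "complex_of_real (Bw \<xi>) = hs P (Twirl (B \<xi>) P)" for \<xi>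
    by (simp add: Bw_def hs_Twirl_eq_enum_B[OF sa idem])
  have A_nonneg: "A \<xi> \<ge> 0" for \<xi> by (simp add: A_def enum_A_nonneg)
  have A_le: "A \<xi> \<le> real K * Bw \<xi>" for \<xi>
    using enum_A_le_enum_B[OF sa idem] by (simp add: A_def Bw_def norm_P)
  have A_eq: "A \<xi> = real K * Bw \<xi>" if "\<xi> \<in> S" for \<xi>
    using enum_A_eq_enum_B_if_detects[OF sa idem detects_subset[OF det[OF that] basis_subset]]
    by (simp add: A_def Bw_def norm_P)
  have sum_A: "(\<Sum>\<xi>\<in>UNIV. A \<xi>) = real K" using sum_enum_A by (simp add: A_def norm_P)
  have sum_Bw: "(\<Sum>\<xi>\<in>UNIV. Bw \<xi>) = real K ^ 2"
    using sum_enum_B[OF sa idem] by (simp add: Bw_def norm_P)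
  have MacWilliams:
    "complex_of_real (Bw \<xi>) = (\<Sum>\<sigma>\<in>UNIV. MacW B \<xi> \<sigma> * complex_of_real (A \<sigma>))" for \<xi>
    by (simp add: Bw_hs A_hs Twirl_MacWilliams[of \<xi> P] hs_sum_right hs_msc_right)
  show ?thesis
    using A_hs Bw_hs A_nonneg A_le sum_A sum_Bw MacWilliams A_eq by blast
qed

end
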